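(* Let $s$ be a positive even integer and $\mathfrak{S}\subseteq(\mathbb{Z}/s\mathbb{Z})^2$. Let $$\mathcal{N}(\mathfrak{S})=\left\{\tfrac32(\alpha-\beta)+\beta \bmod s/2 \ :\ (\alpha,\beta)\in\mathfrak{S},\ \alpha\equiv\beta\pmod 2\right\},$$ and assume $\mathcal{N}(\mathfrak{S})$ is a complete set of residues modulo $s/2$. Then for every $N\in\mathbb{N}$ there exists a residue $r_{N,s}$ modulo $3s$ such that for every $b\in\mathbb{Z}$ with $b\equiv r_{N,s}\pmod{3s}$ and $a=\frac23(N-b)+b$ we have $N\equiv b\pmod 3$, $a\equiv b\pmod 2$, and $(a,b)\bmod s\in\mathfrak{S}$.
   Context: Since $s$ is even, the parity of a residue modulo $s$ is well defined, and for $\alpha\equiv\beta\pmod 2$ the quantity $\frac32(\alpha-\beta)+\beta$ is a well-defined residue modulo $s/2$. *)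

theory Defs
  imports "HOL-Number_Theory.Number_Theory"
begin

text \<open>Residues modulo s are represented by their canonical representatives in {0..<s};
  a subset of (Z/sZ)^2 is thus a subset of {0..<s} x {0..<s}.\<close>

definition NS :: "int \<Rightarrow> (int \<times> int) set \<Rightarrow> int set" where
  "NS s S = {(3 * ((\<alpha> - \<beta>) div 2) + \<beta>) mod (s div 2) | \<alpha> \<beta>.
              (\<alpha>, \<beta>) \<in> S \<and> [\<alpha> = \<beta>] (mod 2)}"

end

theory Submission
  imports Defs
begin

text \<open>Write \<open>\<phi>(a, b) = 3(a - b)/2 + b\<close>, so that \<open>a = 2(N - b)/3 + b\<close> is exactly the solution
  of \<open>\<phi>(a, b) = N\<close>, and put \<open>t = s/2\<close>. Completeness of \<open>NS s S\<close> gives \<open>(\<alpha>, \<beta>) \<in> S\<close> with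
  \<open>N = \<phi>(\<alpha>, \<beta>) + t q\<close>. Since \<open>\<phi>(\<alpha> + s x, \<beta> + s y) = \<phi>(\<alpha>, \<beta>) + t (3x - y)\<close>, every
  \<open>b = \<beta> + s (3j - q)\<close>, i.e. every \<open>b \<equiv> \<beta> - s q (mod 3s)\<close>, is paired with
  \<open>a = \<alpha> + s j\<close>, and \<open>(a, b) \<equiv> (\<alpha>, \<beta>) (mod s)\<close>.\<close>

lemma NS_complete_obtain_pair:
  fixes s n :: int
  assumes "2 \<le> s" and "NS s S = {0..<s div 2}"
  obtains \<alpha> \<beta> k q where "(\<alpha>, \<beta>) \<in> S" and "\<alpha> = \<beta> + 2 * k"
    and "n = 3 * k + \<beta> + s div 2 * q"
proof -
  have "n mod (s div 2) \<in> NS s S"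
    using assms by simp
  then obtain \<alpha> \<beta> where pair: "(\<alpha>, \<beta>) \<in> S" "[\<alpha> = \<beta>] (mod 2)"
      and "[3 * ((\<alpha> - \<beta>) div 2) + \<beta> = n] (mod s div 2)"
    unfolding NS_def cong_def by auto
  then obtain q where "n = 3 * ((\<alpha> - \<beta>) div 2) + \<beta> + s div 2 * q"
    by (auto simp: cong_iff_lin)
  moreover have "\<alpha> = \<beta> + 2 * ((\<alpha> - \<beta>) div 2)"
    using pair(2) by (simp add: cong_iff_dvd_diff)
  ultimately show thesis
    using that pair(1) by blast
qed

lemma shifted_pair_solves:
  fixes s k \<beta> q n b :: int
  assumes "even s" and "n = 3 * k + \<beta> + s div 2 * q"
    and "[b = \<beta> - s * q] (mod 3 * s)"
  shows "[n = b] (mod 3)"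
    and "[2 * ((n - b) div 3) + b = \<beta> + 2 * k] (mod s)"
    and "[b = \<beta>] (mod s)"
proof -
  obtain t where s: "s = 2 * t"
    using assms(1) by blast
  obtain j where b: "b = \<beta> - s * q + 3 * s * j"
    using cong_sym[OF assms(3)] cong_iff_lin by blast
  have diff: "n - b = 3 * (k + t * q - 2 * t * j)"
    unfolding assms(2) b s by (simp add: algebra_simps)
  have "2 * ((n - b) div 3) + b = (\<beta> + 2 * k) + s * j"
    unfolding diff by (simp add: b s algebra_simps)
  then show "[2 * ((n - b) div 3) + b = \<beta> + 2 * k] (mod s)"
    by (simp add: cong_def)
  show "[n = b] (mod 3)"
    using diff by (simp add: cong_iff_dvd_diff)
  have "b = \<beta> + s * (3 * j - q)"
    unfolding b by (simp add: algebra_simps)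
  then show "[b = \<beta>] (mod s)"
    by (simp add: cong_def)
qed

theorem lemma3p4:
  fixes s :: int and S :: "(int \<times> int) set"
  assumes "s > 0" and "even s"
    and "S \<subseteq> {0..<s} \<times> {0..<s}"
    and "NS s S = {0..<s div 2}"
  shows "\<forall>N::nat. \<exists>r::int. r \<in> {0..<3*s} \<and>
           (\<forall>b::int. [b = r] (mod (3*s)) \<longrightarrow>
              (let a = 2 * ((int N - b) div 3) + b in
                 [int N = b] (mod 3) \<and> [a = b] (mod 2) \<and> (a mod s, b mod s) \<in> S))"
proof
  fix N :: nat
  have "2 \<le> s"
    using assms(1,2) by presburger
  then obtain \<alpha> \<beta> k q where pair: "(\<alpha>, \<beta>) \<in> S" "\<alpha> = \<beta> + 2 * k"
      and N: "int N = 3 * k + \<beta> + s div 2 * q"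
    by (rule NS_complete_obtain_pair[OF _ assms(4)])
  have range: "\<alpha> mod s = \<alpha>" "\<beta> mod s = \<beta>"
    using pair(1) assms(3) by auto
  show "\<exists>r. r \<in> {0..<3*s} \<and> (\<forall>b. [b = r] (mod (3*s)) \<longrightarrow>
          (let a = 2 * ((int N - b) div 3) + b in
             [int N = b] (mod 3) \<and> [a = b] (mod 2) \<and> (a mod s, b mod s) \<in> S))"
  proof (intro exI conjI allI impI)
    show "(\<beta> - s * q) mod (3 * s) \<in> {0..<3*s}"
      using assms(1) by simp
    fix b
    assume "[b = (\<beta> - s * q) mod (3 * s)] (mod (3 * s))"
    then have "[b = \<beta> - s * q] (mod 3 * s)"
      by (simp add: cong_def)
    from shifted_pair_solves[OF assms(2) N this] pair(2) range
    show "let a = 2 * ((int N - b) div 3) + b in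
            [int N = b] (mod 3) \<and> [a = b] (mod 2) \<and> (a mod s, b mod s) \<in> S"
      unfolding Let_def N[symmetric] cong_def using pair(1) by simp
  qed
qed

end
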